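(* Let $f:[0,1]\to[0,1]$ and let $x^\star$ be a maximizer of $f$. Assume there exist constants $L>0$ and $\alpha>0$ such that $f(x^\star)-f(x)\le L|x^\star-x|^\alpha$ for all $x\in[0,1]$. Consider the Greedy algorithm run on the discretization $\{1/K,2/K,\dots,1\}$ with $K=\sqrt{\frac43 T\log T}$, where choosing point $x_t$ at round $t$ yields reward $f(x_t)+\eta_t$ with $\{\eta_t\}$ i.i.d. $1$-subgaussian. Then, if $L\le 3^{1/4}(4/3)^{(2\alpha+1)/4}T^{2\alpha}(\log T)^{(\alpha+1)/2}$, the regret satisfies $$R_T\le 15\max\{L^{1/(2\alpha+1)},L^{-1/(2\alpha+1)}\}\,T^{(3\alpha+2)/(4\alpha+2)}\sqrt{\log T}+1.$$
   Context: The Greedy algorithm on a finite set of arms: at each round it pulls an arm with the highest empirical mean of the rewards observed so far, with the convention $0/0=\infty$ (each arm is pulled once initially). The regret is $R_T=Tf(x^\star)-\mathbb E\big[\sum_{t=1}^T f(x_t)\big]$, where $x_t$ is the point chosen at round $t$. Note $K$ depends only on $T$, not on $L,\alpha$. *)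

theory Defs
  imports "HOL-Probability.Probability"
begin

definition subgaussian :: "'a measure \<Rightarrow> real \<Rightarrow> ('a \<Rightarrow> real) \<Rightarrow> bool" where
  "subgaussian M \<sigma> X \<longleftrightarrow>
     (\<forall>l::real. integrable M (\<lambda>\<omega>. exp (l * X \<omega>)) \<and>
        (\<integral>\<omega>. exp (l * X \<omega>) \<partial>M) \<le> exp (l\<^sup>2 * \<sigma>\<^sup>2 / 2))"

text \<open>Histories are lists of (arm, observed reward); arms are 1..K, arm i is the point i/K.\<close>
definition emp_count :: "(nat \<times> real) list \<Rightarrow> nat \<Rightarrow> nat" where
  "emp_count h i = length (filter (\<lambda>p. fst p = i) h)"

definition emp_mean :: "(nat \<times> real) list \<Rightarrow> nat \<Rightarrow> ereal" where
  "emp_mean h i = (if emp_count h i = 0 then \<infinity>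
     else ereal (sum_list (map snd (filter (\<lambda>p. fst p = i) h)) / real (emp_count h i)))"

definition greedy_set :: "nat \<Rightarrow> (nat \<times> real) list \<Rightarrow> nat set" where
  "greedy_set K h = {i \<in> {1..K}. \<forall>j\<in>{1..K}. emp_mean h j \<le> emp_mean h i}"

text \<open>History of Greedy after t rounds; tb is the tie-breaking rule (round, set of maximizers),
  e is the noise realization, reward at round t is f(a/K) + e t.\<close>
fun greedy_hist :: "(real \<Rightarrow> real) \<Rightarrow> nat \<Rightarrow> (nat \<Rightarrow> nat set \<Rightarrow> nat) \<Rightarrow> (nat \<Rightarrow> real)
    \<Rightarrow> nat \<Rightarrow> (nat \<times> real) list" where
  "greedy_hist f K tb e 0 = []"
| "greedy_hist f K tb e (Suc t) =
     (let h = greedy_hist f K tb e t; a = tb t (greedy_set K h)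
      in h @ [(a, f (real a / real K) + e t)])"

text \<open>Arm pulled by Greedy at round t (rounds are 0,...,T-1).\<close>
definition greedy_arm :: "(real \<Rightarrow> real) \<Rightarrow> nat \<Rightarrow> (nat \<Rightarrow> nat set \<Rightarrow> nat) \<Rightarrow> (nat \<Rightarrow> real)
    \<Rightarrow> nat \<Rightarrow> nat" where
  "greedy_arm f K tb e t = tb t (greedy_set K (greedy_hist f K tb e t))"

definition greedy_regret :: "'a measure \<Rightarrow> (real \<Rightarrow> real) \<Rightarrow> real \<Rightarrow> nat
    \<Rightarrow> (nat \<Rightarrow> nat set \<Rightarrow> nat) \<Rightarrow> (nat \<Rightarrow> 'a \<Rightarrow> real) \<Rightarrow> nat \<Rightarrow> real" where
  "greedy_regret M f xs K tb \<eta> T =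
     real T * f xs -
     (\<integral>\<omega>. (\<Sum>t<T. f (real (greedy_arm f K tb (\<lambda>s. \<eta> s \<omega>) t) / real K)) \<partial>M)"

definition disc_K :: "nat \<Rightarrow> nat" where
  "disc_K T = nat \<lceil>sqrt (4/3 * real T * ln (real T))\<rceil>"

end

theory Submission
  imports Defs
begin

abbreviation noise_space :: "(nat \<Rightarrow> real) measure" where
  "noise_space \<equiv> PiM UNIV (\<lambda>_. borel)"

context
  fixes f :: "real \<Rightarrow> real" and K :: nat and tb :: "nat \<Rightarrow> nat set \<Rightarrow> nat"
begin

lemma greedy_hist_cong:
  "(\<And>s. s < t \<Longrightarrow> e s = e' s) \<Longrightarrow> greedy_hist f K tb e t = greedy_hist f K tb e' t"
  by (induction t) (simp_all add: Let_def)

lemma greedy_arm_cong: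
  "(\<And>s. s < t \<Longrightarrow> e s = e' s) \<Longrightarrow> greedy_arm f K tb e t = greedy_arm f K tb e' t"
  unfolding greedy_arm_def using greedy_hist_cong by metis

definition pull_count :: "(nat \<Rightarrow> real) \<Rightarrow> nat \<Rightarrow> nat \<Rightarrow> nat" where
  "pull_count e t i = (\<Sum>s<t. of_bool (greedy_arm f K tb e s = i))"

definition noise_sum :: "(nat \<Rightarrow> real) \<Rightarrow> nat \<Rightarrow> nat \<Rightarrow> real" where
  "noise_sum e t i = (\<Sum>s<t. if greedy_arm f K tb e s = i then e s else 0)"

lemma real_pull_count: "real (pull_count e t i) = (\<Sum>s<t. of_bool (greedy_arm f K tb e s = i))"
  by (simp add: pull_count_def)

lemma pull_count_mono: "s \<le> t \<Longrightarrow> pull_count e s i \<le> pull_count e t i"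
  unfolding pull_count_def by (rule sum_mono2) auto

lemma pull_count_less:
  assumes "s < t" "greedy_arm f K tb e s = i"
  shows "pull_count e s i < pull_count e t i"
proof -
  have "pull_count e s i < pull_count e (Suc s) i"
    using assms(2) by (simp add: pull_count_def)
  also have "\<dots> \<le> pull_count e t i"
    using assms(1) by (intro pull_count_mono) simp
  finally show ?thesis .
qed

lemma pull_count_le: "pull_count e t i \<le> t"
proof -
  have "pull_count e t i \<le> (\<Sum>s<t. 1)"
    unfolding pull_count_def by (intro sum_mono) simp
  then show ?thesis by simp
qed

lemma inj_on_pull_count: "inj_on (\<lambda>t. pull_count e t i) {t. greedy_arm f K tb e t = i}"
proof (rule inj_onI)
  fix s t
  assume "s \<in> {t. greedy_arm f K tb e t = i}" "t \<in> {t. greedy_arm f K tb e t = i}"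
    and "pull_count e s i = pull_count e t i"
  then show "s = t"
    using pull_count_less[of s t e i] pull_count_less[of t s e i] by (cases s t rule: linorder_cases) auto
qed

lemma emp_count_greedy_hist: "emp_count (greedy_hist f K tb e t) i = pull_count e t i"
  by (induction t) (simp_all add: Let_def emp_count_def pull_count_def greedy_arm_def)

lemma reward_sum_greedy_hist:
  "sum_list (map snd (filter (\<lambda>p. fst p = i) (greedy_hist f K tb e t)))
     = real (pull_count e t i) * f (real i / real K) + noise_sum e t i"
  by (induction t) (simp_all add: Let_def pull_count_def noise_sum_def greedy_arm_def algebra_simps)

lemma emp_mean_greedy_hist:
  "emp_mean (greedy_hist f K tb e t) i =
     (if pull_count e t i = 0 then \<infinity>
      else ereal (f (real i / real K) + noise_sum e t i / real (pull_count e t i)))"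
  by (simp add: emp_mean_def emp_count_greedy_hist reward_sum_greedy_hist field_simps)

lemma measurable_emp_mean_greedy_hist:
  assumes "\<And>s. s < t \<Longrightarrow> (\<lambda>e. greedy_arm f K tb e s) \<in> noise_space \<rightarrow>\<^sub>M count_space UNIV"
  shows "(\<lambda>e. emp_mean (greedy_hist f K tb e t) i) \<in> borel_measurable noise_space"
proof -
  have pulled: "Measurable.pred noise_space (\<lambda>e. greedy_arm f K tb e s = j)" if "s < t" for s j
    by (rule measurable_compose[OF assms[OF that]]) simp
  have [measurable]: "(\<lambda>e. real (pull_count e t i)) \<in> borel_measurable noise_space"
    unfolding real_pull_count using pulled by (intro borel_measurable_sum) auto
  have [measurable]: "(\<lambda>e. noise_sum e t i) \<in> borel_measurable noise_space"
    unfolding noise_sum_def using pulled by (intro borel_measurable_sum) auto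
  have "Measurable.pred noise_space (\<lambda>e. real (pull_count e t i) = 0)"
    by measurable
  then have [measurable]: "Measurable.pred noise_space (\<lambda>e. pull_count e t i = 0)"
    by simp
  show ?thesis
    unfolding emp_mean_greedy_hist by measurable
qed

lemma greedy_arm_eq_iff:
  "greedy_arm f K tb e t = i \<longleftrightarrow> (\<exists>S\<in>Pow {1..K}. tb t S = i \<and> (\<forall>i\<in>{1..K}. i \<in> S \<longleftrightarrow>
     (\<forall>j\<in>{1..K}. emp_mean (greedy_hist f K tb e t) j \<le> emp_mean (greedy_hist f K tb e t) i)))"
proof -
  define P where "P S \<longleftrightarrow> (\<forall>i\<in>{1..K}. i \<in> S \<longleftrightarrow>
    (\<forall>j\<in>{1..K}. emp_mean (greedy_hist f K tb e t) j \<le> emp_mean (greedy_hist f K tb e t) i))" for S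
  have "greedy_set K (greedy_hist f K tb e t) = S \<longleftrightarrow> P S" if "S \<in> Pow {1..K}" for S
    using that unfolding P_def greedy_set_def by auto
  moreover have "greedy_set K (greedy_hist f K tb e t) \<in> Pow {1..K}"
    unfolding greedy_set_def by auto
  ultimately have "greedy_arm f K tb e t = i \<longleftrightarrow> (\<exists>S\<in>Pow {1..K}. tb t S = i \<and> P S)"
    unfolding greedy_arm_def by blast
  then show ?thesis
    unfolding P_def .
qed

lemma measurable_greedy_arm:
  "(\<lambda>e. greedy_arm f K tb e t) \<in> noise_space \<rightarrow>\<^sub>M count_space UNIV"
proof (induction t rule: less_induct)
  case (less t)
  define mean where "mean j e = emp_mean (greedy_hist f K tb e t) j" for j e
  have "mean j \<in> borel_measurable noise_space" for j
    unfolding mean_def using less by (rule measurable_emp_mean_greedy_hist)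
  then have [measurable]: "Measurable.pred noise_space (\<lambda>e. mean j e \<le> mean i e)" for i j
    unfolding pred_def by (intro borel_measurable_le)
  have "Measurable.pred noise_space (\<lambda>e. greedy_arm f K tb e t = i)" for i
    unfolding greedy_arm_eq_iff mean_def[symmetric] by measurable
  then have "(\<lambda>e. greedy_arm f K tb e t) -` {i} \<inter> space noise_space \<in> sets noise_space" for i
    unfolding pred_def by (simp add: vimage_def Int_def conj_commute)
  then show ?case
    unfolding measurable_count_space_eq2_countable by simp
qed

end

definition predictable :: "(nat \<Rightarrow> (nat \<Rightarrow> real) \<Rightarrow> bool) \<Rightarrow> bool" where
  "predictable sel \<longleftrightarrow> (\<forall>t. Measurable.pred noise_space (sel t)) \<and>
     (\<forall>t e e'. (\<forall>s<t. e s = e' s) \<longrightarrow> sel t e = sel t e')"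

definition exp_process :: "(nat \<Rightarrow> (nat \<Rightarrow> real) \<Rightarrow> bool) \<Rightarrow> real \<Rightarrow> nat \<Rightarrow> (nat \<Rightarrow> real) \<Rightarrow> real" where
  "exp_process sel l t e = exp (\<Sum>s<t. if sel s e then l * e s - l\<^sup>2 / 2 else 0)"

lemma exp_process_0 [simp]: "exp_process sel l 0 e = 1"
  by (simp add: exp_process_def)

lemma exp_process_nonneg [simp]: "0 \<le> exp_process sel l t e"
  by (simp add: exp_process_def)

lemma exp_process_Suc:
  "exp_process sel l (Suc t) e = exp_process sel l t e * (if sel t e then exp (l * e t) * exp (- (l\<^sup>2 / 2)) else 1)"
  by (simp add: exp_process_def exp_add[symmetric])

lemma exp_process_cong:
  assumes "predictable sel" and "\<And>s. s < t \<Longrightarrow> e s = e' s"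
  shows "exp_process sel l t e = exp_process sel l t e'"
proof -
  have "sel s e = sel s e'" if "s < t" for s
    using assms that unfolding predictable_def by (metis order.strict_trans)
  then show ?thesis
    unfolding exp_process_def using assms(2) by (intro arg_cong[where f = exp] sum.cong) auto
qed

lemma measurable_exp_process [measurable]:
  assumes "predictable sel"
  shows "exp_process sel l t \<in> borel_measurable noise_space"
proof -
  have [measurable]: "Measurable.pred noise_space (sel s)" for s
    using assms by (simp add: predictable_def)
  show ?thesis
    unfolding exp_process_def by measurable
qed

definition stopped_above :: "real \<Rightarrow> real \<Rightarrow> (nat \<Rightarrow> (nat \<Rightarrow> real) \<Rightarrow> bool) \<Rightarrow> nat \<Rightarrow> (nat \<Rightarrow> real) \<Rightarrow> bool" where
  "stopped_above c l sel s e \<longleftrightarrow> sel s e \<and> (\<forall>r::nat\<le>s. exp_process sel l r e < c)"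

lemma predictable_stopped_above:
  assumes "predictable sel"
  shows "predictable (stopped_above c l sel)"
  unfolding predictable_def
proof (intro conjI allI impI)
  fix t
  have [measurable]: "Measurable.pred noise_space (sel t)"
    using assms by (simp add: predictable_def)
  have "stopped_above c l sel t = (\<lambda>e. sel t e \<and> (\<forall>r\<in>{..t}. exp_process sel l r e < c))"
    unfolding stopped_above_def by auto
  also have "Measurable.pred noise_space \<dots>"
    using assms by measurable
  finally show "Measurable.pred noise_space (stopped_above c l sel t)" .
next
  fix t and e e' :: "nat \<Rightarrow> real"
  assume "\<forall>s<t. e s = e' s"
  moreover have "exp_process sel l r e = exp_process sel l r e'" if "r \<le> t" "\<forall>s<t. e s = e' s" for r
    using that by (intro exp_process_cong[OF assms]) auto
  moreover have "sel t e = sel t e'"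
    using assms calculation(1) unfolding predictable_def by blast
  ultimately show "stopped_above c l sel t e = stopped_above c l sel t e'"
    unfolding stopped_above_def by simp
qed

text \<open>Stopping the process at the first time it reaches \<open>c\<close> freezes it at a value \<open>\<ge> c\<close>.\<close>
lemma exp_process_stopped_above_ge:
  assumes "c \<le> exp_process sel l t e" and "t \<le> T"
  shows "c \<le> exp_process (stopped_above c l sel) l T e"
proof -
  define \<tau> where "\<tau> = (LEAST r. c \<le> exp_process sel l r e)"
  have "c \<le> exp_process sel l \<tau> e" and "\<tau> \<le> t"
    using assms(1) unfolding \<tau>_def by (auto intro: LeastI Least_le)
  have before_\<tau>: "(\<forall>r\<le>s. exp_process sel l r e < c) \<longleftrightarrow> s < \<tau>" for s
  proof
    assume "\<forall>r\<le>s. exp_process sel l r e < c"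
    with \<open>c \<le> exp_process sel l \<tau> e\<close> show "s < \<tau>"
      by (meson not_le)
  next
    assume "s < \<tau>"
    show "\<forall>r\<le>s. exp_process sel l r e < c"
    proof (intro allI impI)
      fix r
      assume "r \<le> s"
      with \<open>s < \<tau>\<close> have "\<not> c \<le> exp_process sel l r e"
        unfolding \<tau>_def by (intro not_less_Least) simp
      then show "exp_process sel l r e < c" by simp
    qed
  qed
  have "exp_process (stopped_above c l sel) l T e
      = exp (\<Sum>s<T. if sel s e \<and> s < \<tau> then l * e s - l\<^sup>2 / 2 else 0)"
    unfolding exp_process_def[of "stopped_above c l sel"] stopped_above_def before_\<tau> ..
  also have "\<dots> = exp_process sel l \<tau> e"
    unfolding exp_process_def using \<open>\<tau> \<le> t\<close> assms(2)
    by (intro arg_cong[where f = exp] sum.mono_neutral_cong_right) auto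
  finally show ?thesis
    using \<open>c \<le> exp_process sel l \<tau> e\<close> by simp
qed

locale subgaussian_noise = prob_space M for M :: "'a measure" +
  fixes \<eta> :: "nat \<Rightarrow> 'a \<Rightarrow> real"
  assumes measurable_noise [measurable]: "\<And>t. \<eta> t \<in> borel_measurable M"
    and indep_noise: "indep_vars (\<lambda>_. borel) \<eta> UNIV"
    and subgaussian_noise: "\<And>t. subgaussian M 1 (\<eta> t)"
begin

lemma measurable_noise_path [measurable]: "(\<lambda>\<omega> s. \<eta> s \<omega>) \<in> M \<rightarrow>\<^sub>M noise_space"
  by (rule measurable_PiM_single') auto

lemma nn_integral_past_present:
  fixes g :: "(nat \<Rightarrow> real) \<Rightarrow> ennreal" and h :: "real \<Rightarrow> ennreal"
  assumes g: "g \<in> borel_measurable noise_space"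
    and g_past: "\<And>e e'. (\<And>s. s < t \<Longrightarrow> e s = e' s) \<Longrightarrow> g e = g e'"
    and h: "h \<in> borel_measurable borel"
  shows "(\<integral>\<^sup>+\<omega>. g (\<lambda>s. \<eta> s \<omega>) * h (\<eta> t \<omega>) \<partial>M) =
         (\<integral>\<^sup>+\<omega>. g (\<lambda>s. \<eta> s \<omega>) \<partial>M) * (\<integral>\<^sup>+\<omega>. h (\<eta> t \<omega>) \<partial>M)"
proof -
  define past where "past \<omega> = restrict (\<lambda>s. \<eta> s \<omega>) {..<t}" for \<omega>
  define present where "present \<omega> = restrict (\<lambda>s. \<eta> s \<omega>) {t}" for \<omega>
  define g' where "g' x = g (\<lambda>s. if s < t then x s else 0)" for x :: "nat \<Rightarrow> real"
  define h' where "h' x = h (x t)" for x :: "nat \<Rightarrow> real"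
  have "indep_var (PiM {..<t} (\<lambda>_. borel)) past (PiM {t} (\<lambda>_. borel)) present"
    unfolding past_def present_def by (rule indep_var_restrict[OF indep_noise]) auto
  moreover have "g' \<in> borel_measurable (PiM {..<t} (\<lambda>_. borel))"
  proof -
    have "(\<lambda>x s. if s < t then x s else 0) \<in> PiM {..<t} (\<lambda>_. borel) \<rightarrow>\<^sub>M noise_space"
    proof (rule measurable_PiM_single')
      show "(\<lambda>x. if s < t then x s else 0) \<in> borel_measurable (PiM {..<t} (\<lambda>_. borel))" for s
        by (cases "s < t") (simp_all add: measurable_component_singleton)
    qed simp
    then show ?thesis
      unfolding g'_def using g by measurable
  qed
  moreover have "h' \<in> borel_measurable (PiM {t} (\<lambda>_. borel))"
    unfolding h'_def using h by measurable
  ultimately have indep: "indep_var borel (g' \<circ> past) borel (h' \<circ> present)"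
    by (rule indep_var_compose)
  have "case_bool borel borel = (\<lambda>_. borel :: ennreal measure)"
    by (simp add: fun_eq_iff split: bool.split)
  then have "indep_vars (\<lambda>_. borel) (case_bool (g' \<circ> past) (h' \<circ> present)) UNIV"
    using indep unfolding indep_var_def by simp
  then have "(\<integral>\<^sup>+\<omega>. (\<Prod>b\<in>UNIV. case_bool (g' \<circ> past) (h' \<circ> present) b \<omega>) \<partial>M) =
      (\<Prod>b\<in>UNIV. \<integral>\<^sup>+\<omega>. case_bool (g' \<circ> past) (h' \<circ> present) b \<omega> \<partial>M)"
    by (intro indep_vars_nn_integral) auto
  then have "(\<integral>\<^sup>+\<omega>. (g' \<circ> past) \<omega> * (h' \<circ> present) \<omega> \<partial>M) =
      (\<integral>\<^sup>+\<omega>. (g' \<circ> past) \<omega> \<partial>M) * (\<integral>\<^sup>+\<omega>. (h' \<circ> present) \<omega> \<partial>M)"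
    by (simp add: UNIV_bool mult.commute comp_def)
  moreover have "(g' \<circ> past) \<omega> = g (\<lambda>s. \<eta> s \<omega>)" for \<omega>
    unfolding g'_def past_def comp_def by (rule g_past) simp
  moreover have "(h' \<circ> present) \<omega> = h (\<eta> t \<omega>)" for \<omega>
    unfolding h'_def present_def by simp
  ultimately show ?thesis
    by simp
qed

lemma nn_integral_exp_noise_le:
  "(\<integral>\<^sup>+\<omega>. ennreal (exp (l * \<eta> t \<omega>)) \<partial>M) * ennreal (exp (- (l\<^sup>2 / 2))) \<le> 1"
proof -
  have "(\<integral>\<^sup>+\<omega>. ennreal (exp (l * \<eta> t \<omega>)) \<partial>M) = ennreal (\<integral>\<omega>. exp (l * \<eta> t \<omega>) \<partial>M)"
    using subgaussian_noise[of t] unfolding subgaussian_def by (intro nn_integral_eq_integral) auto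
  also have "\<dots> \<le> ennreal (exp (l\<^sup>2 / 2))"
    using subgaussian_noise[of t] unfolding subgaussian_def by (intro ennreal_leI) simp
  finally have "(\<integral>\<^sup>+\<omega>. ennreal (exp (l * \<eta> t \<omega>)) \<partial>M) * ennreal (exp (- (l\<^sup>2 / 2)))
      \<le> ennreal (exp (l\<^sup>2 / 2)) * ennreal (exp (- (l\<^sup>2 / 2)))"
    by (rule mult_right_mono) simp
  also have "\<dots> = 1"
    by (simp add: ennreal_mult[symmetric] exp_add[symmetric])
  finally show ?thesis .
qed

text \<open>The supermartingale step: conditionally on the past, a selected round multiplies the process
  by \<open>exp (l * \<eta> t - l\<^sup>2 / 2)\<close>, whose mean is at most \<open>1\<close>.\<close>
lemma nn_integral_exp_process_Suc_le:
  assumes sel: "predictable sel"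
  shows "(\<integral>\<^sup>+\<omega>. exp_process sel l (Suc t) (\<lambda>s. \<eta> s \<omega>) \<partial>M)
    \<le> (\<integral>\<^sup>+\<omega>. exp_process sel l t (\<lambda>s. \<eta> s \<omega>) \<partial>M)"
proof -
  have [measurable]: "Measurable.pred noise_space (sel t)"
    using sel by (simp add: predictable_def)
  note [measurable] = measurable_exp_process[OF sel]
  define stay where "stay e = ennreal (if sel t e then 0 else exp_process sel l t e)" for e
  define move where "move e = ennreal (if sel t e then exp_process sel l t e else 0)" for e
  define k where "k = ennreal (exp (- (l\<^sup>2 / 2)))"
  have [measurable]: "stay \<in> borel_measurable noise_space" "move \<in> borel_measurable noise_space"
    unfolding stay_def move_def by measurable
  have split: "ennreal (exp_process sel l (Suc t) e) = stay e + move e * ennreal (exp (l * e t)) * k" for e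
    unfolding stay_def move_def k_def exp_process_Suc by (simp add: ennreal_mult mult.assoc)
  have move_past: "move e = move e'" if "\<And>s. s < t \<Longrightarrow> e s = e' s" for e e'
  proof -
    have "sel t e = sel t e'"
      using sel that unfolding predictable_def by blast
    then show ?thesis
      unfolding move_def using exp_process_cong[OF sel that] by simp
  qed
  have "(\<integral>\<^sup>+\<omega>. move (\<lambda>s. \<eta> s \<omega>) * ennreal (exp (l * \<eta> t \<omega>)) \<partial>M)
      = (\<integral>\<^sup>+\<omega>. move (\<lambda>s. \<eta> s \<omega>) \<partial>M) * (\<integral>\<^sup>+\<omega>. ennreal (exp (l * \<eta> t \<omega>)) \<partial>M)"
  proof (rule nn_integral_past_present)
    show "move e = move e'" if "\<And>s. s < t \<Longrightarrow> e s = e' s" for e e'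
      using that by (rule move_past)
  qed measurable
  moreover have "(\<integral>\<^sup>+\<omega>. move (\<lambda>s. \<eta> s \<omega>) * ennreal (exp (l * \<eta> t \<omega>)) * k \<partial>M)
      = (\<integral>\<^sup>+\<omega>. move (\<lambda>s. \<eta> s \<omega>) * ennreal (exp (l * \<eta> t \<omega>)) \<partial>M) * k"
    by (rule nn_integral_multc) measurable
  ultimately have "(\<integral>\<^sup>+\<omega>. move (\<lambda>s. \<eta> s \<omega>) * ennreal (exp (l * \<eta> t \<omega>)) * k \<partial>M)
      \<le> (\<integral>\<^sup>+\<omega>. move (\<lambda>s. \<eta> s \<omega>) \<partial>M)"
    using mult_left_mono[OF nn_integral_exp_noise_le, of "\<integral>\<^sup>+\<omega>. move (\<lambda>s. \<eta> s \<omega>) \<partial>M" l t]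
    unfolding k_def by (simp add: mult.assoc)
  have "(\<integral>\<^sup>+\<omega>. exp_process sel l (Suc t) (\<lambda>s. \<eta> s \<omega>) \<partial>M)
      = (\<integral>\<^sup>+\<omega>. stay (\<lambda>s. \<eta> s \<omega>) \<partial>M)
        + (\<integral>\<^sup>+\<omega>. move (\<lambda>s. \<eta> s \<omega>) * ennreal (exp (l * \<eta> t \<omega>)) * k \<partial>M)"
    unfolding split by (rule nn_integral_add) measurable
  also have "\<dots> \<le> (\<integral>\<^sup>+\<omega>. stay (\<lambda>s. \<eta> s \<omega>) \<partial>M) + (\<integral>\<^sup>+\<omega>. move (\<lambda>s. \<eta> s \<omega>) \<partial>M)"
    using \<open>(\<integral>\<^sup>+\<omega>. move (\<lambda>s. \<eta> s \<omega>) * ennreal (exp (l * \<eta> t \<omega>)) * k \<partial>M) \<le> _\<close>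
    by (rule add_left_mono)
  also have "\<dots> = (\<integral>\<^sup>+\<omega>. stay (\<lambda>s. \<eta> s \<omega>) + move (\<lambda>s. \<eta> s \<omega>) \<partial>M)"
    by (rule nn_integral_add[symmetric]) measurable
  also have "\<dots> = (\<integral>\<^sup>+\<omega>. exp_process sel l t (\<lambda>s. \<eta> s \<omega>) \<partial>M)"
    unfolding stay_def move_def by (intro nn_integral_cong) simp
  finally show ?thesis .
qed

lemma nn_integral_exp_process_le_1:
  assumes "predictable sel"
  shows "(\<integral>\<^sup>+\<omega>. exp_process sel l t (\<lambda>s. \<eta> s \<omega>) \<partial>M) \<le> 1"
proof (induction t)
  case 0
  show ?case
    by (simp add: emeasure_space_1)
next
  case (Suc t)
  with nn_integral_exp_process_Suc_le[OF assms, of l t] show ?case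
    by order
qed

text \<open>Ville's maximal inequality for the nonnegative supermartingale \<open>exp_process\<close>.\<close>
lemma prob_exp_process_reaches_le:
  assumes sel: "predictable sel" and c: "0 < c"
  shows "prob {\<omega>\<in>space M. \<exists>t\<le>T. c \<le> exp_process sel l t (\<lambda>s. \<eta> s \<omega>)} \<le> 1 / c"
proof -
  define Z where "Z \<omega> = ennreal (exp_process (stopped_above c l sel) l T (\<lambda>s. \<eta> s \<omega>))" for \<omega>
  note stopped = predictable_stopped_above[OF sel, of c l]
  have [measurable]: "Z \<in> borel_measurable M"
    unfolding Z_def using measurable_exp_process[OF stopped] by measurable
  have [measurable]: "Measurable.pred M (\<lambda>\<omega>. \<exists>t\<le>T. c \<le> exp_process sel l t (\<lambda>s. \<eta> s \<omega>))"
    using measurable_exp_process[OF sel] by measurable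
  have "{\<omega>\<in>space M. \<exists>t\<le>T. c \<le> exp_process sel l t (\<lambda>s. \<eta> s \<omega>)}
      \<subseteq> {\<omega>\<in>space M. 1 \<le> ennreal (1 / c) * Z \<omega>}"
  proof safe
    fix \<omega> t
    assume "t \<le> T" "c \<le> exp_process sel l t (\<lambda>s. \<eta> s \<omega>)"
    then have "1 \<le> (1 / c) * exp_process (stopped_above c l sel) l T (\<lambda>s. \<eta> s \<omega>)"
      using c exp_process_stopped_above_ge by (simp add: field_simps)
    then show "1 \<le> ennreal (1 / c) * Z \<omega>"
      unfolding Z_def using c by (simp add: ennreal_mult[symmetric] ennreal_1[symmetric] del: ennreal_1)
  qed
  then have "emeasure M {\<omega>\<in>space M. \<exists>t\<le>T. c \<le> exp_process sel l t (\<lambda>s. \<eta> s \<omega>)}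
      \<le> emeasure M {\<omega>\<in>space M. 1 \<le> ennreal (1 / c) * Z \<omega>}"
    by (intro emeasure_mono) measurable
  also have "\<dots> \<le> ennreal (1 / c) * (\<integral>\<^sup>+\<omega>. Z \<omega> * indicator (space M) \<omega> \<partial>M)"
    by (intro nn_integral_Markov_inequality) measurable
  also have "(\<integral>\<^sup>+\<omega>. Z \<omega> * indicator (space M) \<omega> \<partial>M) = (\<integral>\<^sup>+\<omega>. Z \<omega> \<partial>M)"
    by (rule nn_integral_cong) simp
  also have "ennreal (1 / c) * \<dots> \<le> ennreal (1 / c) * 1"
    unfolding Z_def by (intro mult_left_mono nn_integral_exp_process_le_1[OF stopped]) simp
  finally show ?thesis
    using c by (simp add: emeasure_eq_measure)
qed

end


context
  fixes f :: "real \<Rightarrow> real" and K :: nat and tb :: "nat \<Rightarrow> nat set \<Rightarrow> nat"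
begin

lemma predictable_greedy_arm_in: "predictable (\<lambda>s e. greedy_arm f K tb e s \<in> A)"
  unfolding predictable_def
proof (intro conjI allI impI)
  show "Measurable.pred noise_space (\<lambda>e. greedy_arm f K tb e t \<in> A)" for t
    by (rule measurable_compose[OF measurable_greedy_arm]) simp
  show "(greedy_arm f K tb e t \<in> A) = (greedy_arm f K tb e' t \<in> A)"
    if "\<forall>s<t. e s = e' s" for t e e'
    using that greedy_arm_cong[of t e e'] by simp
qed

lemma exp_process_greedy_arm_in:
  assumes "finite A"
  shows "exp_process (\<lambda>s e. greedy_arm f K tb e s \<in> A) l t e =
    exp (l * (\<Sum>j\<in>A. noise_sum f K tb e t j) - l\<^sup>2 / 2 * (\<Sum>j\<in>A. real (pull_count f K tb e t j)))"
proof -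
  have "(\<Sum>s<t. if greedy_arm f K tb e s \<in> A then l * e s - l\<^sup>2 / 2 else 0)
      = (\<Sum>s<t. \<Sum>j\<in>A. if greedy_arm f K tb e s = j then l * e s - l\<^sup>2 / 2 else 0)"
    using assms by simp
  also have "\<dots> = (\<Sum>j\<in>A. \<Sum>s<t. if greedy_arm f K tb e s = j then l * e s - l\<^sup>2 / 2 else 0)"
    by (rule sum.swap)
  also have "\<dots> = (\<Sum>j\<in>A. l * noise_sum f K tb e t j - l\<^sup>2 / 2 * real (pull_count f K tb e t j))"
    unfolding noise_sum_def real_pull_count sum_distrib_left sum_subtractf[symmetric]
    by (intro sum.cong refl) auto
  finally show ?thesis
    unfolding exp_process_def by (simp add: sum_subtractf sum_distrib_left)
qed

end

locale greedy_bandit =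
  fixes f :: "real \<Rightarrow> real" and xs :: real and K :: nat and tb :: "nat \<Rightarrow> nat set \<Rightarrow> nat"
  assumes f_range: "\<And>x. x \<in> {0..1} \<Longrightarrow> f x \<in> {0..1}"
    and xs_mem: "xs \<in> {0..1}"
    and f_le_max: "\<And>x. x \<in> {0..1} \<Longrightarrow> f x \<le> f xs"
    and K_pos: "1 \<le> K"
    and tb_mem: "\<And>t S. S \<noteq> {} \<Longrightarrow> S \<subseteq> {1..K} \<Longrightarrow> tb t S \<in> S"
begin

abbreviation arm :: "(nat \<Rightarrow> real) \<Rightarrow> nat \<Rightarrow> nat" where
  "arm e t \<equiv> greedy_arm f K tb e t"

definition gap :: "nat \<Rightarrow> real" where
  "gap i = f xs - f (real i / real K)"

lemma gap_bounds: "i \<in> {1..K} \<Longrightarrow> 0 \<le> gap i \<and> gap i \<le> 1"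
proof -
  assume "i \<in> {1..K}"
  then have "real i / real K \<in> {0..1}"
    by auto
  then show ?thesis
    using f_range f_le_max f_range[OF xs_mem] unfolding gap_def by fastforce
qed

lemma greedy_set_nonempty: "greedy_set K h \<noteq> {}"
proof -
  have "Max (emp_mean h ` {1..K}) \<in> emp_mean h ` {1..K}"
    using K_pos by (intro Max_in) auto
  then obtain i where "i \<in> {1..K}" "emp_mean h i = Max (emp_mean h ` {1..K})"
    by auto
  then have "i \<in> greedy_set K h"
    unfolding greedy_set_def by (auto intro: Max_ge)
  then show ?thesis
    by blast
qed

lemma arm_in_greedy_set: "arm e t \<in> greedy_set K (greedy_hist f K tb e t)"
  unfolding greedy_arm_def by (intro tb_mem greedy_set_nonempty) (auto simp: greedy_set_def)

lemma arm_mem: "arm e t \<in> {1..K}"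
  using arm_in_greedy_set unfolding greedy_set_def by blast

lemma emp_mean_le_arm:
  "j \<in> {1..K} \<Longrightarrow> emp_mean (greedy_hist f K tb e t) j \<le> emp_mean (greedy_hist f K tb e t) (arm e t)"
  using arm_in_greedy_set unfolding greedy_set_def by blast

text \<open>Unpulled arms have empirical mean \<open>\<infinity>\<close>, so once Greedy repeats an arm every arm has been pulled.\<close>
lemma pulled_if_arm_pulled:
  assumes "1 \<le> pull_count f K tb e t (arm e t)" and "j \<in> {1..K}"
  shows "1 \<le> pull_count f K tb e t j"
  using emp_mean_le_arm[OF assms(2), of e t] assms(1)
  by (cases "pull_count f K tb e t j = 0") (auto simp: emp_mean_greedy_hist)

definition underestimated :: "nat set \<Rightarrow> nat \<Rightarrow> real \<Rightarrow> nat \<Rightarrow> (nat \<Rightarrow> real) \<Rightarrow> bool" where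
  "underestimated A m \<delta> t e \<longleftrightarrow>
     exp (\<delta>\<^sup>2 * real m / 2) \<le> exp_process (\<lambda>s e. greedy_arm f K tb e s \<in> A) (- \<delta>) t e"

definition overestimated :: "real \<Rightarrow> nat \<Rightarrow> nat \<Rightarrow> nat \<Rightarrow> (nat \<Rightarrow> real) \<Rightarrow> bool" where
  "overestimated g i n t e \<longleftrightarrow>
     exp (real n * (gap i - g)\<^sup>2 / 2) \<le> exp_process (\<lambda>s e. greedy_arm f K tb e s = i) (gap i - g) t e"

lemma exists_noise_mean_gt_if_not_underestimated:
  assumes A: "A \<subseteq> {1..K}" "m \<le> card A" and \<delta>: "0 < \<delta>"
    and pulled: "\<And>j. j \<in> A \<Longrightarrow> 1 \<le> pull_count f K tb e t j"
    and "\<not> underestimated A m \<delta> t e"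
  shows "\<exists>j\<in>A. - \<delta> * real (pull_count f K tb e t j) < noise_sum f K tb e t j"
proof (rule ccontr)
  define S where "S = (\<Sum>j\<in>A. noise_sum f K tb e t j)"
  define N where "N = (\<Sum>j\<in>A. real (pull_count f K tb e t j))"
  assume "\<not> ?thesis"
  then have "S \<le> - \<delta> * N"
    unfolding S_def N_def sum_distrib_left by (intro sum_mono) (simp add: not_less)
  moreover have "real m \<le> N"
  proof -
    have "real m \<le> (\<Sum>j\<in>A. 1)"
      using A by simp
    also have "\<dots> \<le> N"
      unfolding N_def using pulled by (intro sum_mono) simp
    finally show ?thesis .
  qed
  moreover have "- \<delta> * S - \<delta>\<^sup>2 / 2 * N < \<delta>\<^sup>2 * real m / 2"
    using assms(5) finite_subset[OF A(1)] unfolding underestimated_def S_def N_def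
    by (simp add: exp_process_greedy_arm_in)
  moreover have "\<delta>\<^sup>2 * N \<le> - (\<delta> * S)"
    using mult_left_mono[OF \<open>S \<le> - \<delta> * N\<close>, of \<delta>] \<delta> by (simp add: power2_eq_square)
  moreover have "\<delta>\<^sup>2 * real m \<le> \<delta>\<^sup>2 * N"
    using \<open>real m \<le> N\<close> by (simp add: mult_left_mono)
  ultimately show False
    by simp
qed

lemma arm_mean_ge_if_not_underestimated:
  assumes A: "A \<subseteq> {1..K}" "m \<le> card A" and \<delta>: "0 < \<delta>"
    and near: "\<And>j. j \<in> A \<Longrightarrow> gap j \<le> g0"
    and pulled: "1 \<le> pull_count f K tb e t (arm e t)"
    and "\<not> underestimated A m \<delta> t e"
  shows "f xs - (g0 + \<delta>) \<le> f (real (arm e t) / real K) +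
           noise_sum f K tb e t (arm e t) / real (pull_count f K tb e t (arm e t))"
proof -
  have all_pulled: "1 \<le> pull_count f K tb e t j" if "j \<in> {1..K}" for j
    using pulled_if_arm_pulled[OF pulled that] .
  obtain j where "j \<in> A" and j: "- \<delta> * real (pull_count f K tb e t j) < noise_sum f K tb e t j"
    using exists_noise_mean_gt_if_not_underestimated[OF A \<delta> _ assms(6)] all_pulled A(1) by blast
  then have jK: "j \<in> {1..K}"
    using A(1) by blast
  have "- \<delta> < noise_sum f K tb e t j / real (pull_count f K tb e t j)"
    using j all_pulled[OF jK] by (simp add: field_simps)
  then have "f xs - (g0 + \<delta>) \<le> f (real j / real K) + noise_sum f K tb e t j / real (pull_count f K tb e t j)"
    using near[OF \<open>j \<in> A\<close>] unfolding gap_def by simp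
  also have "\<dots> \<le> f (real (arm e t) / real K) +
           noise_sum f K tb e t (arm e t) / real (pull_count f K tb e t (arm e t))"
    using emp_mean_le_arm[OF jK, of e t] all_pulled[OF jK] pulled by (simp add: emp_mean_greedy_hist)
  finally show ?thesis .
qed

lemma overestimated_if_mean_ge:
  assumes mean: "f xs - g \<le> f (real i / real K) + noise_sum f K tb e t i / real (pull_count f K tb e t i)"
    and pulled: "1 \<le> pull_count f K tb e t i" and "g < gap i"
  shows "overestimated g i (pull_count f K tb e t i) t e"
proof -
  define l where "l = gap i - g"
  define n where "n = real (pull_count f K tb e t i)"
  define S where "S = noise_sum f K tb e t i"
  have "0 < n" "0 < l"
    using pulled \<open>g < gap i\<close> unfolding n_def l_def by auto
  moreover have "l \<le> S / n"
    using mean unfolding l_def n_def S_def gap_def by simp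
  ultimately have "l * (n * l) \<le> l * S"
    by (simp add: field_simps)
  then have "n * l\<^sup>2 / 2 \<le> l * S - l\<^sup>2 / 2 * n"
    by (simp add: power2_eq_square algebra_simps)
  then show ?thesis
    unfolding overestimated_def exp_process_greedy_arm_in[of "{i}", simplified]
    by (simp add: l_def[symmetric] n_def[symmetric] S_def[symmetric])
qed

lemma card_first_pulls_le: "card {t\<in>{..<T}. pull_count f K tb e t (arm e t) = 0} \<le> K"
proof -
  let ?F = "{t\<in>{..<T}. pull_count f K tb e t (arm e t) = 0}"
  have "inj_on (arm e) ?F"
  proof (rule inj_onI)
    fix s t
    assume "s \<in> ?F" "t \<in> ?F" "arm e s = arm e t"
    then show "s = t"
      using pull_count_less[of s t f K tb e] pull_count_less[of t s f K tb e]
      by (cases s t rule: linorder_cases) auto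
  qed
  then have "card ?F \<le> card {1..K}"
    using arm_mem by (intro card_inj_on_le) auto
  then show ?thesis
    by simp
qed

text \<open>Off the underestimation event, the \<open>n\<close>-th pull of an arm whose gap exceeds \<open>2 * (g0 + \<delta>)\<close>
  witnesses the event \<open>overestimated (g0 + \<delta>) i n\<close>; distinct pulls have distinct \<open>n\<close>.\<close>
lemma card_repeated_pulls_le:
  assumes A: "A \<subseteq> {1..K}" "m \<le> card A" and \<delta>: "0 < \<delta>"
    and near: "\<And>j. j \<in> A \<Longrightarrow> gap j \<le> g0" and "0 \<le> g0"
    and not_under: "\<not> (\<exists>t\<le>T. underestimated A m \<delta> t e)" and gap: "2 * (g0 + \<delta>) < gap i"
  shows "card {t\<in>{..<T}. arm e t = i \<and> pull_count f K tb e t i \<noteq> 0}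
    \<le> card {n\<in>{1..T}. \<exists>t\<le>T. overestimated (g0 + \<delta>) i n t e}"
proof (rule card_inj_on_le)
  show "inj_on (\<lambda>t. pull_count f K tb e t i) {t\<in>{..<T}. arm e t = i \<and> pull_count f K tb e t i \<noteq> 0}"
    by (rule inj_on_subset[OF inj_on_pull_count]) auto
  show "(\<lambda>t. pull_count f K tb e t i) ` {t\<in>{..<T}. arm e t = i \<and> pull_count f K tb e t i \<noteq> 0}
      \<subseteq> {n\<in>{1..T}. \<exists>t\<le>T. overestimated (g0 + \<delta>) i n t e}"
  proof
    fix n
    assume "n \<in> (\<lambda>t. pull_count f K tb e t i) ` {t\<in>{..<T}. arm e t = i \<and> pull_count f K tb e t i \<noteq> 0}"
    then obtain t where t: "t < T" "arm e t = i" "pull_count f K tb e t i \<noteq> 0" and n: "n = pull_count f K tb e t i"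
      by blast
    then have "f xs - (g0 + \<delta>) \<le> f (real i / real K) + noise_sum f K tb e t i / real (pull_count f K tb e t i)"
      using arm_mean_ge_if_not_underestimated[OF A \<delta> near, of e t] not_under by auto
    then have "overestimated (g0 + \<delta>) i n t e"
      unfolding n using t(3) gap \<delta> \<open>0 \<le> g0\<close> by (intro overestimated_if_mean_ge) auto
    then show "n \<in> {n\<in>{1..T}. \<exists>t\<le>T. overestimated (g0 + \<delta>) i n t e}"
      using t n pull_count_le[of f K tb e t i] by (auto intro!: exI[of _ t])
  qed
qed simp

lemma gap_sum_le:
  assumes A: "A \<subseteq> {1..K}" "m \<le> card A" and \<delta>: "0 < \<delta>"
    and near: "\<And>j. j \<in> A \<Longrightarrow> gap j \<le> g0" and "0 \<le> g0"
  defines "g \<equiv> g0 + \<delta>"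
  shows "(\<Sum>t<T. gap (arm e t)) \<le> real K + 2 * g * real T
           + real T * of_bool (\<exists>t\<le>T. underestimated A m \<delta> t e)
           + (\<Sum>i\<in>{i\<in>{1..K}. 2 * g < gap i}.
                gap i * (\<Sum>n\<in>{1..T}. of_bool (\<exists>t\<le>T. overestimated g i n t e)))"
    (is "_ \<le> _ + ?over")
proof -
  define I where "I = {i\<in>{1..K}. 2 * g < gap i}"
  have "0 < g"
    using \<delta> \<open>0 \<le> g0\<close> unfolding g_def by simp
  have gap_arm: "0 \<le> gap (arm e t) \<and> gap (arm e t) \<le> 1" for t
    using gap_bounds[OF arm_mem] .
  have "0 \<le> ?over"
    using gap_bounds by (intro sum_nonneg mult_nonneg_nonneg) auto
  show ?thesis
  proof (cases "\<exists>t\<le>T. underestimated A m \<delta> t e")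
    case True
    have "(\<Sum>t<T. gap (arm e t)) \<le> (\<Sum>t<T. 1)"
      using gap_arm by (intro sum_mono) auto
    moreover have "0 \<le> 2 * g * real T"
      using \<open>0 < g\<close> by simp
    ultimately show ?thesis
      using True \<open>0 \<le> ?over\<close> by simp
  next
    case False
    define first where "first = {t\<in>{..<T}. pull_count f K tb e t (arm e t) = 0}"
    define late where "late = {t\<in>{..<T}. pull_count f K tb e t (arm e t) \<noteq> 0 \<and> 2 * g < gap (arm e t)}"
    have "gap (arm e t) \<le> of_bool (t \<in> first) + 2 * g + (if t \<in> late then gap (arm e t) else 0)"
      if "t < T" for t
      using that gap_arm[of t] \<open>0 < g\<close> unfolding first_def late_def by auto
    then have "(\<Sum>t<T. gap (arm e t)) \<le> (\<Sum>t<T. of_bool (t \<in> first) + 2 * g + (if t \<in> late then gap (arm e t) else 0))"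
      by (intro sum_mono) simp
    also have "\<dots> = real (card first) + 2 * g * real T + (\<Sum>t\<in>late. gap (arm e t))"
    proof -
      have "{..<T} \<inter> first = first" "{..<T} \<inter> late = late"
        unfolding first_def late_def by auto
      then show ?thesis
        by (simp add: sum.distrib sum.inter_restrict[symmetric] Int_def)
    qed
    also have "(\<Sum>t\<in>late. gap (arm e t)) = (\<Sum>i\<in>I. \<Sum>t\<in>{t\<in>late. arm e t = i}. gap (arm e t))"
      using arm_mem unfolding late_def I_def by (intro sum.group[symmetric]) auto
    also have "\<dots> \<le> ?over"
      unfolding I_def[symmetric]
    proof (intro sum_mono)
      fix i
      assume "i \<in> I"
      then have "{t\<in>late. arm e t = i} = {t\<in>{..<T}. arm e t = i \<and> pull_count f K tb e t i \<noteq> 0}"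
        unfolding late_def I_def by auto
      then have "real (card {t\<in>late. arm e t = i}) \<le> (\<Sum>n\<in>{1..T}. of_bool (\<exists>t\<le>T. overestimated g i n t e))"
        using card_repeated_pulls_le[OF A \<delta> near \<open>0 \<le> g0\<close> False] \<open>i \<in> I\<close>
        unfolding I_def g_def by (simp add: Int_def)
      moreover have "0 \<le> gap i"
        using \<open>i \<in> I\<close> \<open>0 < g\<close> unfolding I_def by simp
      ultimately have "real (card {t\<in>late. arm e t = i}) * gap i
          \<le> (\<Sum>n\<in>{1..T}. of_bool (\<exists>t\<le>T. overestimated g i n t e)) * gap i"
        by (rule mult_right_mono)
      then show "(\<Sum>t\<in>{t\<in>late. arm e t = i}. gap (arm e t))
          \<le> gap i * (\<Sum>n\<in>{1..T}. of_bool (\<exists>t\<le>T. overestimated g i n t e))"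
        by (simp add: mult.commute)
    qed
    finally show ?thesis
      using card_first_pulls_le[of T e] False unfolding first_def by simp
  qed
qed

end


lemma sum_exp_neg_mult_le:
  fixes a :: real
  assumes "0 < a"
  shows "(\<Sum>n\<in>{1..N}. exp (- (real n * a))) \<le> 1 / a"
proof -
  define r where "r = exp (- a)"
  have "0 < r" "r < 1"
    unfolding r_def using assms by auto
  have "(\<Sum>n\<in>{1..N}. exp (- (real n * a))) = (\<Sum>n\<in>{1..N}. r ^ n)"
    unfolding r_def by (simp add: exp_of_nat_mult[symmetric] mult.commute)
  also have "\<dots> \<le> r / (1 - r)"
    using \<open>0 < r\<close> \<open>r < 1\<close> by (simp add: sum_gp divide_right_mono)
  also have "\<dots> \<le> 1 / a"
  proof -
    have "1 + a \<le> exp a"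
      by (rule exp_ge_add_one_self)
    then have "r * (1 + a) \<le> 1"
      using \<open>0 < r\<close> mult_left_mono[of "1 + a" "exp a" r] unfolding r_def by (simp add: exp_minus field_simps)
    then show ?thesis
      using assms \<open>r < 1\<close> by (simp add: field_simps)
  qed
  finally show ?thesis .
qed

lemma gap_div_square_le:
  fixes g G :: real
  assumes "2 * g < G" and "0 < g"
  shows "G / (G - g)\<^sup>2 \<le> 2 / g"
proof -
  have "G / 2 \<le> G - g" "0 < G" "0 < G - g"
    using assms by auto
  then have "(G / 2)\<^sup>2 \<le> (G - g)\<^sup>2"
    by (intro power_mono) auto
  then have "G / (G - g)\<^sup>2 \<le> G / (G / 2)\<^sup>2"
    using \<open>0 < G\<close> \<open>0 < G - g\<close> by (intro divide_left_mono) auto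
  also have "\<dots> = 4 / G"
    using \<open>0 < G\<close> by (simp add: power2_eq_square field_simps)
  also have "\<dots> \<le> 2 / g"
    using assms by (simp add: field_simps)
  finally show ?thesis .
qed

lemma (in prob_space) expectation_of_bool:
  assumes "Measurable.pred M P"
  shows "expectation (\<lambda>\<omega>. of_bool (P \<omega>) :: real) = prob {\<omega>\<in>space M. P \<omega>}"
proof -
  have "expectation (\<lambda>\<omega>. of_bool (P \<omega>) :: real) = expectation (indicator {\<omega>\<in>space M. P \<omega>})"
    by (intro Bochner_Integration.integral_cong) auto
  then show ?thesis
    by (simp add: Int_absorb2)
qed

lemma (in prob_space) integrable_of_bool:
  "Measurable.pred M P \<Longrightarrow> integrable M (\<lambda>\<omega>. of_bool (P \<omega>) :: real)"
  by (rule integrable_const_bound[where B = 1]) auto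

locale greedy_bandit_noise = greedy_bandit + subgaussian_noise
begin

definition path_regret :: "nat \<Rightarrow> 'a \<Rightarrow> real" where
  "path_regret T \<omega> = (\<Sum>t<T. gap (arm (\<lambda>s. \<eta> s \<omega>) t))"

lemma path_regret_bounds: "0 \<le> path_regret T \<omega> \<and> path_regret T \<omega> \<le> real T"
proof -
  have "0 \<le> path_regret T \<omega>"
    unfolding path_regret_def using gap_bounds[OF arm_mem] by (intro sum_nonneg) blast
  moreover have "path_regret T \<omega> \<le> (\<Sum>t<T. 1)"
    unfolding path_regret_def using gap_bounds[OF arm_mem] by (intro sum_mono) blast
  ultimately show ?thesis
    by simp
qed

lemma measurable_path_regret [measurable]: "path_regret T \<in> borel_measurable M"
proof -
  have "(\<lambda>\<omega>. arm (\<lambda>s. \<eta> s \<omega>) t) \<in> M \<rightarrow>\<^sub>M count_space UNIV" for t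
    by (rule measurable_compose[OF measurable_noise_path measurable_greedy_arm])
  then show ?thesis
    unfolding path_regret_def by measurable
qed

lemma integrable_path_regret: "integrable M (path_regret T)"
  using path_regret_bounds by (intro integrable_const_bound[where B = "real T"]) auto

lemma greedy_regret_eq_expectation: "greedy_regret M f xs K tb \<eta> T = expectation (path_regret T)"
proof -
  have "(\<Sum>t<T. f (real (arm (\<lambda>s. \<eta> s \<omega>) t) / real K)) = real T * f xs - path_regret T \<omega>" for \<omega>
    unfolding path_regret_def gap_def by (simp add: sum_subtractf)
  then show ?thesis
    unfolding greedy_regret_def using integrable_path_regret by (simp add: prob_space)
qed

lemma greedy_regret_le_horizon: "greedy_regret M f xs K tb \<eta> T \<le> real T"
proof -
  have "expectation (path_regret T) \<le> expectation (\<lambda>_. real T)"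
    using path_regret_bounds by (intro integral_mono integrable_path_regret) auto
  then show ?thesis
    by (simp add: greedy_regret_eq_expectation prob_space)
qed

lemma prob_underestimated_le:
  "prob {\<omega>\<in>space M. \<exists>t\<le>T. underestimated A m \<delta> t (\<lambda>s. \<eta> s \<omega>)} \<le> exp (- (\<delta>\<^sup>2 * real m / 2))"
  using prob_exp_process_reaches_le[OF predictable_greedy_arm_in, of "exp (\<delta>\<^sup>2 * real m / 2)"]
  unfolding underestimated_def by (simp add: exp_minus inverse_eq_divide)

lemma prob_overestimated_le:
  "prob {\<omega>\<in>space M. \<exists>t\<le>T. overestimated g i n t (\<lambda>s. \<eta> s \<omega>)} \<le> exp (- (real n * (gap i - g)\<^sup>2 / 2))"
  using prob_exp_process_reaches_le[OF predictable_greedy_arm_in[of _ _ _ "{i}"], of "exp (real n * (gap i - g)\<^sup>2 / 2)"]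
  unfolding overestimated_def by (simp add: exp_minus inverse_eq_divide)

lemma gap_mult_sum_prob_overestimated_le:
  assumes "0 < g" and "2 * g < gap i"
  shows "gap i * (\<Sum>n\<in>{1..N}. prob {\<omega>\<in>space M. \<exists>t\<le>T. overestimated g i n t (\<lambda>s. \<eta> s \<omega>)}) \<le> 4 / g"
proof -
  define a where "a = (gap i - g)\<^sup>2 / 2"
  have "0 < a" "0 < gap i"
    using assms unfolding a_def by auto
  have "(\<Sum>n\<in>{1..N}. prob {\<omega>\<in>space M. \<exists>t\<le>T. overestimated g i n t (\<lambda>s. \<eta> s \<omega>)})
      \<le> (\<Sum>n\<in>{1..N}. exp (- (real n * a)))"
    using prob_overestimated_le unfolding a_def by (intro sum_mono) (simp add: mult.assoc)
  also have "\<dots> \<le> 1 / a"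
    using \<open>0 < a\<close> by (rule sum_exp_neg_mult_le)
  finally have "gap i * (\<Sum>n\<in>{1..N}. prob {\<omega>\<in>space M. \<exists>t\<le>T. overestimated g i n t (\<lambda>s. \<eta> s \<omega>)})
      \<le> gap i * (1 / a)"
    using \<open>0 < gap i\<close> by (intro mult_left_mono) auto
  also have "\<dots> = 2 * (gap i / (gap i - g)\<^sup>2)"
    unfolding a_def by simp
  also have "\<dots> \<le> 4 / g"
    using gap_div_square_le[OF assms(2,1)] by simp
  finally show ?thesis .
qed

lemma greedy_regret_le:
  assumes A: "A \<subseteq> {1..K}" "m \<le> card A" and \<delta>: "0 < \<delta>"
    and near: "\<And>j. j \<in> A \<Longrightarrow> gap j \<le> g0" and "0 \<le> g0"
  shows "greedy_regret M f xs K tb \<eta> T \<le> real K + real T * exp (- (\<delta>\<^sup>2 * real m / 2))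
           + 2 * (g0 + \<delta>) * real T + 4 * real K / (g0 + \<delta>)"
proof -
  define g where "g = g0 + \<delta>"
  define I where "I = {i\<in>{1..K}. 2 * g < gap i}"
  define under where "under \<omega> \<longleftrightarrow> (\<exists>t\<le>T. underestimated A m \<delta> t (\<lambda>s. \<eta> s \<omega>))" for \<omega>
  define over where "over i n \<omega> \<longleftrightarrow> (\<exists>t\<le>T. overestimated g i n t (\<lambda>s. \<eta> s \<omega>))" for i n \<omega>
  have "0 < g"
    using \<delta> \<open>0 \<le> g0\<close> unfolding g_def by simp
  have [measurable]: "(\<lambda>\<omega>. exp_process (\<lambda>s e. arm e s \<in> B) l t (\<lambda>s. \<eta> s \<omega>)) \<in> borel_measurable M" for B l t
    by (rule measurable_compose[OF measurable_noise_path measurable_exp_process[OF predictable_greedy_arm_in]])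
  have [measurable]: "Measurable.pred M under" "Measurable.pred M (over i n)" for i n
    unfolding under_def over_def underestimated_def overestimated_def singleton_iff[symmetric] by measurable
  have "path_regret T \<omega> \<le> real K + 2 * g * real T + real T * of_bool (under \<omega>)
      + (\<Sum>i\<in>I. gap i * (\<Sum>n\<in>{1..T}. of_bool (over i n \<omega>)))" for \<omega>
    unfolding path_regret_def I_def under_def over_def g_def using gap_sum_le[OF A \<delta> near \<open>0 \<le> g0\<close>] by simp
  then have "expectation (path_regret T) \<le> expectation (\<lambda>\<omega>. real K + 2 * g * real T
      + real T * of_bool (under \<omega>) + (\<Sum>i\<in>I. gap i * (\<Sum>n\<in>{1..T}. of_bool (over i n \<omega>))))"
    by (intro integral_mono integrable_path_regret Bochner_Integration.integrable_add
        Bochner_Integration.integrable_sum Bochner_Integration.integrable_mult_right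
        integrable_of_bool integrable_const) measurable
  also have "\<dots> = real K + 2 * g * real T + real T * prob {\<omega>\<in>space M. under \<omega>}
      + (\<Sum>i\<in>I. gap i * (\<Sum>n\<in>{1..T}. prob {\<omega>\<in>space M. over i n \<omega>}))"
    by (simp add: integrable_of_bool expectation_of_bool prob_space Bochner_Integration.integral_sum
        del: sum_of_bool_eq)
  also have "real T * prob {\<omega>\<in>space M. under \<omega>} \<le> real T * exp (- (\<delta>\<^sup>2 * real m / 2))"
    unfolding under_def by (intro mult_left_mono prob_underestimated_le) simp
  also have "(\<Sum>i\<in>I. gap i * (\<Sum>n\<in>{1..T}. prob {\<omega>\<in>space M. over i n \<omega>})) \<le> (\<Sum>i\<in>I. 4 / g)"
    unfolding over_def I_def using \<open>0 < g\<close> by (intro sum_mono gap_mult_sum_prob_overestimated_le) auto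
  also have "\<dots> \<le> 4 * real K / g"
  proof -
    have "card I \<le> card {1..K}"
      unfolding I_def by (intro card_mono) auto
    then show ?thesis
      using \<open>0 < g\<close> by (simp add: divide_right_mono)
  qed
  finally show ?thesis
    unfolding g_def greedy_regret_eq_expectation by linarith
qed

end


lemma card_near_arms_ge:
  fixes c :: real and m K :: nat
  assumes "1 \<le> m" "m \<le> K" "0 \<le> c" "c \<le> real K"
  shows "m \<le> card {i\<in>{1..K}. \<bar>real i - c\<bar> \<le> real m}"
proof -
  define b where "b = nat \<lceil>c\<rceil>"
  define a where "a = max 1 (min (K + 1 - m) b)"
  have b: "c \<le> real b" "real b < c + 1"
    using assms(3) unfolding b_def by linarith+
  have a: "1 \<le> a" "a + m \<le> K + 1" "a \<le> b \<or> a = 1" "b \<le> a \<or> a + m = K + 1"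
    using assms(1,2) unfolding a_def by auto
  have "{a..<a + m} \<subseteq> {i\<in>{1..K}. \<bar>real i - c\<bar> \<le> real m}"
  proof
    fix i
    assume i: "i \<in> {a..<a + m}"
    then have "real i + 1 \<le> real a + real m" "real a \<le> real i"
      by auto
    moreover have "real a \<le> real b \<or> a = 1" "real b \<le> real a \<or> real a + real m = real K + 1"
      using a(3,4) by (auto simp flip: of_nat_add)
    ultimately have "\<bar>real i - c\<bar> \<le> real m"
      using b assms(3,4) by auto
    with i a(1,2) show "i \<in> {i\<in>{1..K}. \<bar>real i - c\<bar> \<le> real m}"
      by auto
  qed
  then have "card {a..<a + m} \<le> card {i\<in>{1..K}. \<bar>real i - c\<bar> \<le> real m}"
    by (intro card_mono) auto
  then show ?thesis
    by simp
qed

lemma sqrt_le_disc_K: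
  assumes "2 \<le> T"
  shows "sqrt (real T * ln (real T)) \<le> real (disc_K T)"
proof -
  have "sqrt (real T * ln (real T)) \<le> sqrt (4/3 * real T * ln (real T))"
    using assms by (intro real_sqrt_le_mono) simp
  also have "\<dots> \<le> real (disc_K T)"
    unfolding disc_K_def by linarith
  finally show ?thesis .
qed

lemma disc_K_pos:
  assumes "2 \<le> T"
  shows "1 \<le> disc_K T"
proof -
  have "0 < sqrt (real T * ln (real T))"
    using assms by simp
  then have "0 < real (disc_K T)"
    using sqrt_le_disc_K[OF assms] by linarith
  then show ?thesis
    by simp
qed

lemma disc_K_le:
  assumes "2 \<le> T" and "225 \<le> sqrt (real T * ln (real T))"
  shows "real (disc_K T) \<le> 7/6 * sqrt (real T * ln (real T))"
proof -
  have "sqrt (4/3 :: real) \<le> 116/100"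
    by (rule real_le_lsqrt) (auto simp: power2_eq_square)
  then have "sqrt (4/3) * sqrt (real T * ln (real T)) \<le> 116/100 * sqrt (real T * ln (real T))"
    using assms(1) by (intro mult_right_mono) simp_all
  then have "sqrt (4/3 * real T * ln (real T)) \<le> 116/100 * sqrt (real T * ln (real T))"
    by (simp only: real_sqrt_mult mult.assoc)
  moreover have "real (disc_K T) \<le> sqrt (4/3 * real T * ln (real T)) + 1"
    unfolding disc_K_def using assms(1) by simp
  ultimately show ?thesis
    using assms(2) by linarith
qed

lemma ln_ge_1_if_sqrt_large:
  assumes "2 \<le> T" and "225 * ln (real T) < sqrt (real T)"
  shows "1 \<le> ln (real T)"
proof -
  have "T \<noteq> 2"
  proof
    assume "T = 2"
    moreover have "1/2 \<le> ln (2::real)"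
      using ln_diff_le[of 1 2] by simp
    moreover have "sqrt (2::real) < 2"
      by (rule real_less_lsqrt) auto
    ultimately show False
      using assms(2) by simp
  qed
  then have "exp 1 \<le> real T"
    using assms(1) exp_le by linarith
  then show ?thesis
    using assms(1) by (simp add: ln_ge_iff)
qed

lemma exists_nat_le_ge_half:
  assumes "2 \<le> x" and "1 \<le> K"
  obtains m :: nat where "1 \<le> m" "m \<le> K" "real m \<le> x" "m = K \<or> x \<le> 2 * real m"
proof
  let ?m = "min K (nat \<lfloor>x\<rfloor>)"
  show "1 \<le> ?m" "?m \<le> K"
    using assms by (auto simp: le_nat_floor)
  show "real ?m \<le> x"
    using assms(1) by (simp add: min_def) linarith
  show "?m = K \<or> x \<le> 2 * real ?m"
    using assms(1) by (simp add: min_def) linarith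
qed

lemma holder_gap_le:
  fixes L \<alpha> T x :: real
  assumes "0 < L" "0 < \<alpha>" "0 < T" and "0 \<le> x"
    and "((L * T powr (1/4)) powr (1 / (2*\<alpha>+1)))\<^sup>2 * x \<le> 1"
  shows "L * x powr \<alpha> \<le> (L * T powr (1/4)) powr (1 / (2*\<alpha>+1)) * T powr (-1/4)"
proof -
  define p where "p = 1 / (2*\<alpha>+1)"
  define y where "y = L * T powr (1/4)"
  have "0 < y"
    using assms unfolding y_def by auto
  have "(y powr p)\<^sup>2 = y powr (2 * p)"
    by (simp add: power2_eq_square powr_add[symmetric])
  then have "x \<le> 1 / y powr (2 * p)"
    using assms(5) \<open>0 < y\<close> unfolding p_def[symmetric] y_def[symmetric] by (simp add: pos_le_divide_eq mult.commute)
  also have "\<dots> = y powr (-2 * p)"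
    by (simp add: powr_minus_divide)
  finally have "x powr \<alpha> \<le> (y powr (-2 * p)) powr \<alpha>"
    using assms(2,4) by (intro powr_mono2) auto
  also have "\<dots> = y powr (p - 1)"
  proof -
    have "-2 * p * \<alpha> = p - 1"
      unfolding p_def using assms(2) by (simp add: field_simps)
    then show ?thesis
      by (simp add: powr_powr)
  qed
  finally have "L * x powr \<alpha> \<le> L * y powr (p - 1)"
    using assms(1) by simp
  also have "\<dots> = y powr p * (L / y)"
    using \<open>0 < y\<close> by (simp add: powr_diff)
  also have "L / y = T powr (-1/4)"
    using assms(1,3) unfolding y_def by (simp add: powr_minus_divide)
  finally show ?thesis
    unfolding y_def p_def .
qed

lemma holder_rate_ge:
  fixes L \<alpha> T :: real
  assumes "0 < L" "0 < \<alpha>" "1 \<le> T"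
  defines "\<Phi> \<equiv> max (L powr (1/(2*\<alpha>+1))) (L powr (-1/(2*\<alpha>+1))) * T powr ((3*\<alpha>+2)/(4*\<alpha>+2))"
  shows "(L * T powr (1/4)) powr (1 / (2*\<alpha>+1)) * T powr (3/4) \<le> \<Phi>"
    and "T powr (3/4) \<le> \<Phi>"
proof -
  define p where "p = 1 / (2*\<alpha>+1)"
  define P where "P = max (L powr p) (L powr (-p))"
  have \<Phi>: "\<Phi> = P * T powr (p / 4 + 3/4)"
  proof -
    have "(3*\<alpha>+2)/(4*\<alpha>+2) = p / 4 + 3/4"
      unfolding p_def using assms(2) by (simp add: field_simps)
    moreover have "-1/(2*\<alpha>+1) = -p"
      unfolding p_def by simp
    ultimately show ?thesis
      unfolding \<Phi>_def P_def p_def by simp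
  qed
  have "(L * T powr (1/4)) powr p * T powr (3/4) = L powr p * T powr (p / 4 + 3/4)"
    using assms by (simp add: powr_mult powr_powr powr_add)
  also have "\<dots> \<le> \<Phi>"
    unfolding \<Phi> P_def by (intro mult_right_mono) auto
  finally show "(L * T powr (1/4)) powr (1 / (2*\<alpha>+1)) * T powr (3/4) \<le> \<Phi>"
    unfolding p_def .
  have "1 \<le> P"
  proof (rule ccontr)
    assume "\<not> 1 \<le> P"
    then have "L powr p * L powr (-p) < 1 * 1"
      unfolding P_def by (intro mult_strict_mono) auto
    then show False
      using assms(1) by (simp add: powr_add[symmetric])
  qed
  moreover have "T powr (3/4) \<le> T powr (p / 4 + 3/4)"
    using assms(2,3) unfolding p_def by (intro powr_mono) auto
  ultimately have "1 * T powr (3/4) \<le> P * T powr (p / 4 + 3/4)"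
    by (intro mult_mono) auto
  then show "T powr (3/4) \<le> \<Phi>"
    unfolding \<Phi> by simp
qed

lemma powr_three_quarters_sq:
  fixes x :: real
  assumes "0 < x"
  shows "(x powr (3/4))\<^sup>2 = x * sqrt x"
proof -
  have "(x powr (3/4))\<^sup>2 = x powr (1 + 1/2)"
    by (simp add: power2_eq_square powr_add[symmetric])
  also have "\<dots> = x * sqrt x"
    using assms by (subst powr_add) (simp add: powr_half_sqrt)
  finally show ?thesis .
qed

lemma sq_lt_sqrt_if_mult_powr_lt:
  fixes a x :: real
  assumes "0 \<le> a" "0 < x" "a * x powr (3/4) < x"
  shows "a\<^sup>2 < sqrt x"
proof -
  have "(a * x powr (3/4))\<^sup>2 < x\<^sup>2"
    using assms by (intro power_strict_mono) auto
  then have "a\<^sup>2 * (x * sqrt x) < sqrt x * (x * sqrt x)"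
    using assms(2) by (simp add: power_mult_distrib powr_three_quarters_sq power2_eq_square[of "sqrt x"]
        power2_eq_square[of x] mult_ac)
  then show ?thesis
    using assms(2) by (simp add: mult_less_cancel_right_pos)
qed

lemma tuned_width_term_le:
  fixes T \<Phi> q k u \<delta> :: real and m :: nat
  assumes "0 < T" "0 < q" "0 < m" "0 \<le> u" "0 \<le> \<Phi>"
    and "T * sqrt T \<le> \<Phi>\<^sup>2" "q\<^sup>2 * (T * sqrt T) \<le> \<Phi>\<^sup>2" "sqrt T \<le> k"
    and "real m = k \<or> k \<le> 2 * q\<^sup>2 * real m"
    and "\<delta>\<^sup>2 * real m = 2 * u\<^sup>2" "0 < \<delta>"
  shows "\<delta> * T \<le> 2 * u * \<Phi>"
proof -
  have TT: "T * T = (T * sqrt T) * sqrt T"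
    using assms(1) by (simp add: mult.assoc)
  have TT_le: "T * T \<le> 2 * \<Phi>\<^sup>2 * real m"
    using assms(9)
  proof
    assume "real m = k"
    have "(T * sqrt T) * sqrt T \<le> \<Phi>\<^sup>2 * k"
      using assms(1,6,8) by (intro mult_mono) auto
    moreover have "0 \<le> k"
      using assms(1,8) real_sqrt_ge_zero[of T] by linarith
    then have "0 \<le> \<Phi>\<^sup>2 * k"
      by simp
    ultimately show ?thesis
      unfolding TT \<open>real m = k\<close> by linarith
  next
    assume k: "k \<le> 2 * q\<^sup>2 * real m"
    have "q\<^sup>2 * (T * T) = (q\<^sup>2 * (T * sqrt T)) * sqrt T"
      unfolding TT by (rule mult.assoc[symmetric])
    also have "\<dots> \<le> \<Phi>\<^sup>2 * k"
      using assms(7,8) by (rule mult_mono) (use assms(1) in simp_all)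
    also have "\<dots> \<le> \<Phi>\<^sup>2 * (2 * q\<^sup>2 * real m)"
      using k by (rule mult_left_mono) simp
    also have "\<dots> = q\<^sup>2 * (2 * \<Phi>\<^sup>2 * real m)"
      by (simp add: algebra_simps)
    finally show ?thesis
      using assms(2) by simp
  qed
  have "(\<delta> * T)\<^sup>2 * real m = (\<delta>\<^sup>2 * real m) * (T * T)"
    by (simp add: power2_eq_square algebra_simps)
  also have "\<dots> \<le> 2 * u\<^sup>2 * (2 * \<Phi>\<^sup>2 * real m)"
    unfolding assms(10) using TT_le by (rule mult_left_mono) simp
  also have "\<dots> = (2 * u * \<Phi>)\<^sup>2 * real m"
    by (simp add: power2_eq_square algebra_simps)
  finally have "(\<delta> * T)\<^sup>2 * real m \<le> (2 * u * \<Phi>)\<^sup>2 * real m" .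
  then have "(\<delta> * T)\<^sup>2 \<le> (2 * u * \<Phi>)\<^sup>2"
    by (rule mult_right_le_imp_le) (use assms(3) in simp)
  then show ?thesis
    by (rule power2_le_imp_le) (use assms(4,5) in simp)
qed

lemma tuned_overestimation_term_le:
  fixes T \<Phi> k u \<delta> :: real and m :: nat
  assumes "0 < T" "0 < m" "1 \<le> u" "T * sqrt T \<le> \<Phi>\<^sup>2"
    and "real m \<le> k" "k \<le> 7/6 * (sqrt T * u)"
    and "\<delta>\<^sup>2 * real m = 2 * u\<^sup>2" "0 < \<delta>" "0 \<le> \<Phi>"
  shows "4 * k / \<delta> \<le> 18/5 * u * \<Phi>"
proof -
  have "0 \<le> k"
    using assms(5) by simp
  have "k ^ 3 \<le> (7/6 * (sqrt T * u)) ^ 3"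
    using assms(6) \<open>0 \<le> k\<close> by (rule power_mono)
  also have "\<dots> = 343/216 * (T * sqrt T) * u ^ 3"
    using assms(1) by (simp add: power_mult_distrib power3_eq_cube)
  also have "\<dots> \<le> 343/216 * \<Phi>\<^sup>2 * u ^ 4"
  proof -
    have "u ^ 3 \<le> u ^ 4"
      using assms(3) by (intro power_increasing) auto
    then show ?thesis
      using assms(1,3,4) by (intro mult_mono) auto
  qed
  finally have k3: "k ^ 3 \<le> 343/216 * \<Phi>\<^sup>2 * u ^ 4" .
  have "(4 * k)\<^sup>2 * real m \<le> 16 * k ^ 3"
    using assms(5) \<open>0 \<le> k\<close> mult_left_mono[of "real m" k "16 * k\<^sup>2"]
    by (simp add: power2_eq_square power3_eq_cube mult_ac)
  also have "\<dots> \<le> (18/5 * u * \<Phi> * \<delta>)\<^sup>2 * real m"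
  proof -
    have "(18/5 * u * \<Phi> * \<delta>)\<^sup>2 * real m = 324/25 * u\<^sup>2 * \<Phi>\<^sup>2 * (\<delta>\<^sup>2 * real m)"
      by (simp add: power2_eq_square algebra_simps)
    also have "\<dots> = 648/25 * \<Phi>\<^sup>2 * u ^ 4"
      unfolding assms(7) by (simp add: power2_eq_square power4_eq_xxxx)
    moreover have "0 \<le> \<Phi>\<^sup>2 * u ^ 4"
      by simp
    ultimately show ?thesis
      using k3 by linarith
  qed
  finally have "(4 * k)\<^sup>2 \<le> (18/5 * u * \<Phi> * \<delta>)\<^sup>2"
    by (rule mult_right_le_imp_le) (use assms(2) in simp)
  then have "4 * k \<le> 18/5 * u * \<Phi> * \<delta>"
    by (rule power2_le_imp_le) (use assms(3,8,9) in simp)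
  then show ?thesis
    using assms(8) by (simp add: divide_le_eq)
qed

lemma large_horizon_bounds:
  fixes q :: real and T :: nat
  assumes T: "2 \<le> T" and q: "0 < q"
    and large: "15 * sqrt (ln (real T)) * real T powr (3/4) < real T"
      "15 * sqrt (ln (real T)) * (q * real T powr (3/4)) < real T"
  shows "1 \<le> sqrt (ln (real T))"
    and "sqrt (real T) * sqrt (ln (real T)) \<le> real (disc_K T)"
    and "real (disc_K T) \<le> 7/6 * (sqrt (real T) * sqrt (ln (real T)))"
    and "2 * q\<^sup>2 \<le> real (disc_K T)"
proof -
  define u where "u = sqrt (ln (real T))"
  define w where "w = sqrt (real T)"
  have "0 < real T" "0 < ln (real T)"
    using T by auto
  then have "0 < u" "u\<^sup>2 = ln (real T)" "0 < w"
    unfolding u_def w_def by auto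
  have "(15 * u)\<^sup>2 < w" "(15 * u * q)\<^sup>2 < w"
    using large \<open>0 < u\<close> q unfolding u_def[symmetric] w_def
    by (intro sq_lt_sqrt_if_mult_powr_lt[OF _ \<open>0 < real T\<close>]; simp add: mult.assoc)+
  then have "225 * u\<^sup>2 < w" "225 * u\<^sup>2 * q\<^sup>2 < w"
    by (simp_all add: power_mult_distrib)
  then have "1 \<le> ln (real T)"
    using T unfolding \<open>u\<^sup>2 = ln (real T)\<close> w_def by (intro ln_ge_1_if_sqrt_large)
  then show "1 \<le> u"
    unfolding u_def by simp
  then have "w \<le> w * u"
    using mult_left_mono[of 1 u w] \<open>0 < w\<close> by simp
  moreover have "225 \<le> w"
    using \<open>225 * u\<^sup>2 < w\<close> \<open>u\<^sup>2 = ln (real T)\<close> \<open>1 \<le> ln (real T)\<close> by linarith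
  ultimately have "225 \<le> w * u"
    by linarith
  moreover have "sqrt (real T * ln (real T)) = w * u"
    unfolding w_def u_def by (simp add: real_sqrt_mult)
  ultimately show "w * u \<le> real (disc_K T)" and "real (disc_K T) \<le> 7/6 * (w * u)"
    using sqrt_le_disc_K[OF T] disc_K_le[OF T] by auto
  have "225 * q\<^sup>2 \<le> 225 * u\<^sup>2 * q\<^sup>2"
    using \<open>1 \<le> u\<close> by (simp add: mult_right_mono)
  then show "2 * q\<^sup>2 \<le> real (disc_K T)"
    using \<open>225 * u\<^sup>2 * q\<^sup>2 < w\<close> \<open>w \<le> w * u\<close> \<open>w * u \<le> real (disc_K T)\<close> zero_le_power2[of q]
    by linarith
qed

lemma tuned_regret_le:
  fixes R T \<Phi> q k u \<delta> :: real and m :: nat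
  assumes "1 \<le> T" "0 < q" "1 \<le> u" "0 \<le> \<Phi>" "T * sqrt T \<le> \<Phi>\<^sup>2" "q\<^sup>2 * (T * sqrt T) \<le> \<Phi>\<^sup>2"
    and "sqrt T * u \<le> k" "k \<le> 7/6 * (sqrt T * u)"
    and "0 < m" "real m \<le> k" "real m = k \<or> k \<le> 2 * q\<^sup>2 * real m"
    and "\<delta>\<^sup>2 * real m = 2 * u\<^sup>2" "0 < \<delta>"
    and R: "R \<le> k + 1 + 2 * \<Phi> + 2 * \<delta> * T + 4 * k / \<delta>"
  shows "R \<le> 15 * (u * \<Phi>) + 1"
proof -
  have "sqrt T * 1 \<le> sqrt T * u"
    using assms(1,3) by (intro mult_left_mono) auto
  then have "sqrt T \<le> k"
    using assms(7) by linarith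
  moreover have "0 < T" "0 \<le> u"
    using assms(1,3) by auto
  ultimately have "\<delta> * T \<le> 2 * u * \<Phi>"
    by (intro tuned_width_term_le[OF _ assms(2,9) _ assms(4-6) _ assms(11-13)])
  moreover have "4 * k / \<delta> \<le> 18/5 * u * \<Phi>"
    by (rule tuned_overestimation_term_le[OF \<open>0 < T\<close> assms(9,3,5,10,8,12,13,4)])
  moreover have "k \<le> 7/6 * u * \<Phi>"
  proof -
    have "T \<le> T * sqrt T" "(sqrt T)\<^sup>2 = T"
      using assms(1) by simp_all
    then have "(sqrt T)\<^sup>2 \<le> \<Phi>\<^sup>2"
      using assms(5) by linarith
    then have "sqrt T \<le> \<Phi>"
      using assms(4) by (rule power2_le_imp_le)
    then have "7/6 * (sqrt T * u) \<le> 7/6 * u * \<Phi>"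
      using assms(3) by (simp add: mult.commute mult_left_mono)
    then show ?thesis
      using assms(8) by linarith
  qed
  moreover have "1 * \<Phi> \<le> u * \<Phi>"
    using assms(3,4) by (rule mult_right_mono)
  ultimately show ?thesis
    using R assms(4) by (simp only: mult.assoc mult_1)
qed

lemma regret_tuning:
  fixes R q \<Phi> :: real and T :: nat
  assumes T: "2 \<le> T" and q: "0 < q"
    and \<Phi>_q: "q * real T powr (3/4) \<le> \<Phi>" and \<Phi>_T: "real T powr (3/4) \<le> \<Phi>"
    and R_T: "R \<le> real T"
    and R_m: "\<And>m \<delta>. 1 \<le> m \<Longrightarrow> m \<le> disc_K T \<Longrightarrow> q\<^sup>2 * real m \<le> real (disc_K T) \<Longrightarrow> 0 < \<delta> \<Longrightarrow>
        R \<le> real (disc_K T) + real T * exp (- (\<delta>\<^sup>2 * real m / 2)) + 2 * (q * real T powr (3/4))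
          + 2 * \<delta> * real T + 4 * real (disc_K T) / \<delta>"
  shows "R \<le> 15 * \<Phi> * sqrt (ln (real T)) + 1"
proof (cases "real T \<le> 15 * \<Phi> * sqrt (ln (real T))")
  case True
  then show ?thesis
    using R_T by linarith
next
  case False
  define u where "u = sqrt (ln (real T))"
  define k where "k = real (disc_K T)"
  have "0 < real T" "0 < ln (real T)"
    using T by auto
  then have "u\<^sup>2 = ln (real T)"
    unfolding u_def by simp
  have "0 \<le> \<Phi>"
    using \<Phi>_T powr_ge_zero[of "real T" "3/4"] by linarith
  have "(real T powr (3/4))\<^sup>2 \<le> \<Phi>\<^sup>2" "(q * real T powr (3/4))\<^sup>2 \<le> \<Phi>\<^sup>2"
    using \<Phi>_T \<Phi>_q q by (simp_all add: power_mono)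
  then have \<Phi>_T': "real T * sqrt (real T) \<le> \<Phi>\<^sup>2" and \<Phi>_q': "q\<^sup>2 * (real T * sqrt (real T)) \<le> \<Phi>\<^sup>2"
    unfolding power_mult_distrib powr_three_quarters_sq[OF \<open>0 < real T\<close>] .
  have "15 * u * \<Phi> < real T"
    using False unfolding u_def by (simp add: mult_ac)
  moreover have "0 \<le> 15 * u"
    unfolding u_def using \<open>0 < ln (real T)\<close> by simp
  then have "15 * u * real T powr (3/4) \<le> 15 * u * \<Phi>" "15 * u * (q * real T powr (3/4)) \<le> 15 * u * \<Phi>"
    using \<Phi>_T \<Phi>_q by (simp_all add: mult_left_mono)
  ultimately have "15 * u * real T powr (3/4) < real T" "15 * u * (q * real T powr (3/4)) < real T"
    by linarith+
  note bounds = large_horizon_bounds[OF T q this[unfolded u_def], folded u_def k_def]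
  have "2 \<le> k / q\<^sup>2"
    using bounds(4) q by (simp add: le_divide_eq)
  then obtain m where m: "1 \<le> m" "m \<le> disc_K T" "real m \<le> k / q\<^sup>2" "m = disc_K T \<or> k / q\<^sup>2 \<le> 2 * real m"
    using disc_K_pos[OF T] by (rule exists_nat_le_ge_half)
  define \<delta> where "\<delta> = sqrt (2 * ln (real T) / real m)"
  have "0 < \<delta>" "\<delta>\<^sup>2 * real m = 2 * u\<^sup>2"
    using m(1) \<open>0 < ln (real T)\<close> \<open>u\<^sup>2 = ln (real T)\<close> unfolding \<delta>_def by auto
  have "q\<^sup>2 * real m \<le> k" "real m = k \<or> k \<le> 2 * q\<^sup>2 * real m"
    using m(3,4) q unfolding k_def by (auto simp: le_divide_eq divide_le_eq mult_ac)
  moreover have "R \<le> k + 1 + 2 * \<Phi> + 2 * \<delta> * real T + 4 * k / \<delta>"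
    using R_m[OF m(1,2) _ \<open>0 < \<delta>\<close>] \<Phi>_q \<open>0 < real T\<close> \<open>\<delta>\<^sup>2 * real m = 2 * u\<^sup>2\<close> \<open>u\<^sup>2 = ln (real T)\<close>
      calculation(1) unfolding k_def by (simp add: exp_minus)
  ultimately have "R \<le> 15 * (u * \<Phi>) + 1"
    using T q \<open>0 \<le> \<Phi>\<close> \<Phi>_T' \<Phi>_q' bounds m(1,2) \<open>\<delta>\<^sup>2 * real m = 2 * u\<^sup>2\<close> \<open>0 < \<delta>\<close>
    by (intro tuned_regret_le[where T = "real T" and m = m]) (auto simp: k_def)
  then show ?thesis
    unfolding u_def by (simp add: mult_ac)
qed

lemma (in greedy_bandit_noise) greedy_regret_le_holder:
  fixes L \<alpha> \<delta> :: real and T m :: nat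
  defines "q \<equiv> (L * real T powr (1/4)) powr (1 / (2*\<alpha>+1))"
  assumes L: "0 < L" and \<alpha>: "0 < \<alpha>" and "0 < T"
    and holder: "\<And>x. x \<in> {0..1} \<Longrightarrow> f xs - f x \<le> L * \<bar>xs - x\<bar> powr \<alpha>"
    and m: "1 \<le> m" "m \<le> K" and q_m: "q\<^sup>2 * real m \<le> real K" and \<delta>: "0 < \<delta>"
  shows "greedy_regret M f xs K tb \<eta> T \<le> real K + real T * exp (- (\<delta>\<^sup>2 * real m / 2))
           + 2 * (q * real T powr (3/4)) + 2 * \<delta> * real T + 4 * real K / \<delta>"
proof -
  define A where "A = {i\<in>{1..K}. \<bar>real i - real K * xs\<bar> \<le> real m}"
  define g0 where "g0 = q * real T powr (-1/4)"
  have "0 < real K"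
    using K_pos by simp
  have "m \<le> card A"
    unfolding A_def using m xs_mem K_pos by (intro card_near_arms_ge) auto
  moreover have "gap j \<le> g0" if "j \<in> A" for j
  proof -
    have j: "real j / real K \<in> {0..1}" "\<bar>real j - real K * xs\<bar> \<le> real m"
      using that \<open>0 < real K\<close> unfolding A_def by auto
    have "\<bar>xs - real j / real K\<bar> = \<bar>real j - real K * xs\<bar> / real K"
      using \<open>0 < real K\<close> by (simp add: field_simps abs_minus_commute)
    also have "\<dots> \<le> real m / real K"
      using j(2) \<open>0 < real K\<close> by (simp add: divide_right_mono)
    finally have "L * \<bar>xs - real j / real K\<bar> powr \<alpha> \<le> L * (real m / real K) powr \<alpha>"
      using L \<alpha> by (simp add: powr_mono2)
    also have "\<dots> \<le> g0"
      unfolding g0_def q_def using L \<alpha> \<open>0 < T\<close> q_m \<open>0 < real K\<close>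
      by (intro holder_gap_le) (auto simp: q_def field_simps)
    finally show ?thesis
      using holder[OF j(1)] unfolding gap_def by simp
  qed
  moreover have "0 \<le> g0"
    unfolding g0_def q_def by simp
  ultimately have "greedy_regret M f xs K tb \<eta> T \<le> real K + real T * exp (- (\<delta>\<^sup>2 * real m / 2))
      + 2 * (g0 + \<delta>) * real T + 4 * real K / (g0 + \<delta>)"
    using A_def \<delta> by (intro greedy_regret_le) auto
  moreover have "2 * (g0 + \<delta>) * real T = 2 * (q * real T powr (3/4)) + 2 * \<delta> * real T"
  proof -
    have "real T * real T powr (-1/4) = real T powr (3/4)"
      using \<open>0 < T\<close> by (simp add: powr_mult_base)
    then show ?thesis
      unfolding g0_def by (simp add: algebra_simps)
  qed
  moreover have "4 * real K / (g0 + \<delta>) \<le> 4 * real K / \<delta>"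
    using \<open>0 \<le> g0\<close> \<delta> \<open>0 < real K\<close> by (intro divide_left_mono) auto
  ultimately show ?thesis
    by linarith
qed

theorem corollary6:
  fixes M :: "'a measure" and \<eta> :: "nat \<Rightarrow> 'a \<Rightarrow> real"
    and f :: "real \<Rightarrow> real" and xs L \<alpha> :: real and T :: nat
    and tb :: "nat \<Rightarrow> nat set \<Rightarrow> nat"
  assumes "prob_space M"
    and "\<And>t. \<eta> t \<in> borel_measurable M"
    and "prob_space.indep_vars M (\<lambda>_. borel) \<eta> UNIV"
    and "\<And>t. distr M borel (\<eta> t) = distr M borel (\<eta> 0)"
    and "\<And>t. subgaussian M 1 (\<eta> t)"
    and "\<And>x. x \<in> {0..1} \<Longrightarrow> f x \<in> {0..1}"
    and "xs \<in> {0..1}" and "\<And>x. x \<in> {0..1} \<Longrightarrow> f x \<le> f xs"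
    and "L > 0" and "\<alpha> > 0"
    and "\<And>x. x \<in> {0..1} \<Longrightarrow> f xs - f x \<le> L * \<bar>xs - x\<bar> powr \<alpha>"
    and "\<And>t S. S \<noteq> {} \<Longrightarrow> S \<subseteq> {1..disc_K T} \<Longrightarrow> tb t S \<in> S"
    and "T \<ge> 2"
    and "L \<le> 3 powr (1/4) * (4/3) powr ((2*\<alpha>+1)/4) * real T powr (2*\<alpha>)
              * ln (real T) powr ((\<alpha>+1)/2)"
  shows "greedy_regret M f xs (disc_K T) tb \<eta> T
     \<le> 15 * max (L powr (1/(2*\<alpha>+1))) (L powr (-1/(2*\<alpha>+1)))
          * real T powr ((3*\<alpha>+2)/(4*\<alpha>+2)) * sqrt (ln (real T)) + 1"
proof -
  have "greedy_bandit f xs (disc_K T) tb"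
    using assms(6-8,12) disc_K_pos[OF assms(13)] by unfold_locales blast+
  moreover have "subgaussian_noise M \<eta>"
    using assms(1-3,5) by (intro subgaussian_noise.intro subgaussian_noise_axioms.intro)
  ultimately interpret greedy_bandit_noise f xs "disc_K T" tb M \<eta>
    by (rule greedy_bandit_noise.intro)
  define q where "q = (L * real T powr (1/4)) powr (1 / (2*\<alpha>+1))"
  have "0 < q"
    unfolding q_def using assms(9,13) by simp
  have "1 \<le> real T"
    using assms(13) by simp
  have "greedy_regret M f xs (disc_K T) tb \<eta> T \<le> real (disc_K T) + real T * exp (- (\<delta>\<^sup>2 * real m / 2))
      + 2 * (q * real T powr (3/4)) + 2 * \<delta> * real T + 4 * real (disc_K T) / \<delta>"
    if "1 \<le> m" "m \<le> disc_K T" "q\<^sup>2 * real m \<le> real (disc_K T)" "0 < \<delta>" for m \<delta>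
    using greedy_regret_le_holder[OF assms(9,10) _ assms(11) that[unfolded q_def]] assms(13)
    unfolding q_def by simp
  from regret_tuning[OF assms(13) \<open>0 < q\<close> holder_rate_ge[OF assms(9,10) \<open>1 \<le> real T\<close>, folded q_def]
      greedy_regret_le_horizon this]
  show ?thesis
    by (simp add: mult.assoc)
qed

end
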